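(* For nonnegative integers $L,M,j$ let $$K(L,M,j)=\sum_{\substack{\ell_0,\dots,\ell_j\ge 0\\ \ell_0+\dots+\ell_j=L}}\ \sum_{\substack{m_0,\dots,m_j\ge 0\\ m_0+\dots+m_j=M}}\ \prod_{r=0}^{j}\binom{\ell_r+m_r}{\ell_r}^{2}.$$ Let $x,y\in[0,1/4)$ and $w\ge 0$ satisfy $w<\sqrt{(1-(x+y))^2-4xy}$ (positive square root). Then the series $\kappa(w,x,y)=\sum_{j,L,M\ge 0}w^{j}x^{L}y^{M}K(L,M,j)$ converges and $$\kappa(w,x,y)=\frac{1}{\sqrt{\big(1-(x+y)\big)^{2}-4xy}-w}.$$ *)

theory Defs
  imports "HOL-Analysis.Analysis"
begin

text \<open>Weak compositions of L into j+1 nonnegative parts (l_0,...,l_j), encoded as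
  functions nat => nat vanishing beyond index j.\<close>
definition wcomps :: "nat \<Rightarrow> nat \<Rightarrow> (nat \<Rightarrow> nat) set" where
  "wcomps L j = {l. (\<forall>r>j. l r = 0) \<and> (\<Sum>r\<le>j. l r) = L}"

definition K :: "nat \<Rightarrow> nat \<Rightarrow> nat \<Rightarrow> nat" where
  "K L M j = (\<Sum>l\<in>wcomps L j. \<Sum>m\<in>wcomps M j. \<Prod>r\<le>j. ((l r + m r) choose (l r))^2)"

end

theory Submission
  imports Defs
begin

text \<open>Splitting off the last part of both compositions shows that \<open>K(\<cdot>,\<cdot>,j)\<close> is the
  \<open>(j+1)\<close>-fold two-dimensional convolution of \<open>binom_sq l m = (l+m choose l)^2\<close>. Its
  generating function is therefore \<open>G^(j+1)\<close>, where \<open>G(x,y) = \<Sum> (l+m choose l)^2 x^l y^m\<close>,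
  and summing the geometric series in \<open>w G\<close> gives \<open>1/(1/G - w)\<close>.

  To evaluate \<open>G\<close>, write (by Vandermonde)
  \<open>(l+m choose l)^2 = \<Sum>\<^sub>k (2k choose k) (l+m choose 2k) (l+m-2k choose l-k)\<close> and substitute
  \<open>l = a+k, m = b+k\<close>: the sum over \<open>a, b\<close> is a negative binomial series in \<open>x+y\<close>, and the
  remaining sum over \<open>k\<close> is the central binomial series \<open>\<Sum> (2k choose k) t^k = 1/\<surd>(1-4t)\<close>
  at \<open>t = xy/(1-x-y)^2\<close>. Hence \<open>G = 1/\<surd>((1-x-y)^2 - 4xy)\<close>.\<close>

definition binom_sq :: "nat \<Rightarrow> nat \<Rightarrow> nat" where
  "binom_sq l m = ((l + m) choose l)^2"

section \<open>The recursion for \<open>K\<close>\<close>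

lemma finite_wcomps: "finite (wcomps L j)"
proof (rule finite_subset)
  show "wcomps L j \<subseteq> {l. \<forall>r. (r \<in> {..j} \<longrightarrow> l r \<in> {..L}) \<and> (r \<notin> {..j} \<longrightarrow> l r = 0)}"
  proof
    fix l assume l: "l \<in> wcomps L j"
    have "l r \<le> L" if "r \<le> j" for r
      using l that member_le_sum[of r "{..j}" l] by (auto simp: wcomps_def)
    with l show "l \<in> {l. \<forall>r. (r \<in> {..j} \<longrightarrow> l r \<in> {..L}) \<and> (r \<notin> {..j} \<longrightarrow> l r = 0)}"
      by (auto simp: wcomps_def)
  qed
  show "finite {l. \<forall>r. (r \<in> {..j} \<longrightarrow> l r \<in> {..L}) \<and> (r \<notin> {..j} \<longrightarrow> l r = (0::nat))}"
    by (rule finite_set_of_finite_funs) auto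
qed

lemma K_0: "K L M 0 = binom_sq L M"
proof -
  have "wcomps L 0 = {\<lambda>r. if r = 0 then L else 0}" for L
    by (auto simp: wcomps_def)
  then show ?thesis
    by (simp add: K_def binom_sq_def)
qed

lemma bij_betw_wcomps_Suc:
  "bij_betw (\<lambda>(L', l). l(Suc j := L - L')) (SIGMA L':{..L}. wcomps L' j) (wcomps L (Suc j))"
proof (rule bij_betw_byWitness[where f' = "\<lambda>l. (L - l (Suc j), l(Suc j := 0))"])
  have last_le: "l (Suc j) \<le> L" if "l \<in> wcomps L (Suc j)" for l
    using that member_le_sum[of "Suc j" "{..Suc j}" l] by (auto simp: wcomps_def)
  have sum_upd: "(\<Sum>r\<le>j. (l(Suc j := a)) r) = (\<Sum>r\<le>j. l r)" for l :: "nat \<Rightarrow> nat" and a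
    by (intro sum.cong) auto
  show "\<forall>p\<in>SIGMA L':{..L}. wcomps L' j.
          (\<lambda>l. (L - l (Suc j), l(Suc j := 0))) ((\<lambda>(L', l). l(Suc j := L - L')) p) = p"
    by (auto simp: wcomps_def)
  show "\<forall>l\<in>wcomps L (Suc j). (\<lambda>(L', l). l(Suc j := L - L')) (L - l (Suc j), l(Suc j := 0)) = l"
    using last_le by (auto simp: fun_eq_iff)
  show "(\<lambda>(L', l). l(Suc j := L - L')) ` (SIGMA L':{..L}. wcomps L' j) \<subseteq> wcomps L (Suc j)"
    by (auto simp: wcomps_def sum.atMost_Suc sum_upd)
  show "(\<lambda>l. (L - l (Suc j), l(Suc j := 0))) ` wcomps L (Suc j) \<subseteq> (SIGMA L':{..L}. wcomps L' j)"
    by (auto simp: wcomps_def sum.atMost_Suc sum_upd)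
qed

lemma K_Suc:
  "K L M (Suc j) = (\<Sum>L'\<le>L. \<Sum>M'\<le>M. K L' M' j * binom_sq (L - L') (M - M'))"
proof -
  define P where "P l m = (\<Prod>r\<le>j. ((l r + m r) choose (l r))^2)" for l m :: "nat \<Rightarrow> nat"
  have prod_upd: "(\<Prod>r\<le>Suc j. (((l(Suc j := a)) r + (m(Suc j := b)) r) choose ((l(Suc j := a)) r))^2)
      = P l m * binom_sq a b" for l m a b
  proof -
    have "(\<Prod>r\<le>j. (((l(Suc j := a)) r + (m(Suc j := b)) r) choose ((l(Suc j := a)) r))^2) = P l m"
      unfolding P_def by (intro prod.cong) auto
    then show ?thesis
      by (simp add: binom_sq_def)
  qed
  have "K L M (Suc j) = (\<Sum>(L', l)\<in>(SIGMA L':{..L}. wcomps L' j).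
      \<Sum>(M', m)\<in>(SIGMA M':{..M}. wcomps M' j).
      P l m * binom_sq (L - L') (M - M'))"
    unfolding K_def
    by (simp add: sum.reindex_bij_betw[OF bij_betw_wcomps_Suc, symmetric] case_prod_unfold
        prod_upd P_def binom_sq_def)
  also have "\<dots> = (\<Sum>L'\<le>L. \<Sum>l\<in>wcomps L' j. \<Sum>M'\<le>M. \<Sum>m\<in>wcomps M' j. P l m * binom_sq (L - L') (M - M'))"
    by (simp add: sum.Sigma[symmetric] finite_wcomps)
  also have "\<dots> = (\<Sum>L'\<le>L. \<Sum>M'\<le>M. \<Sum>l\<in>wcomps L' j. \<Sum>m\<in>wcomps M' j. P l m * binom_sq (L - L') (M - M'))"
    by (intro sum.cong refl sum.swap)
  also have "\<dots> = (\<Sum>L'\<le>L. \<Sum>M'\<le>M. K L' M' j * binom_sq (L - L') (M - M'))"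
    by (simp add: K_def P_def sum_distrib_right)
  finally show ?thesis .
qed

section \<open>Nonnegative double series\<close>

lemma has_sum_SigmaI_nonneg:
  fixes f :: "'a \<times> 'b \<Rightarrow> real"
  assumes "\<And>x. x \<in> A \<Longrightarrow> ((\<lambda>y. f (x, y)) has_sum g x) (B x)"
    and "(g has_sum S) A"
    and "\<And>x y. x \<in> A \<Longrightarrow> y \<in> B x \<Longrightarrow> f (x, y) \<ge> 0"
  shows "(f has_sum S) (Sigma A B)"
  using assms by (intro has_sum_SigmaI summable_on_SigmaI has_sum_imp_summable) auto

lemma has_sum_mult_nonneg:
  fixes f :: "'a \<Rightarrow> real" and g :: "'b \<Rightarrow> real"
  assumes "(f has_sum S) A" "(g has_sum T) B" "\<And>x. x \<in> A \<Longrightarrow> f x \<ge> 0" "\<And>y. y \<in> B \<Longrightarrow> g y \<ge> 0"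
  shows "((\<lambda>(x, y). f x * g y) has_sum S * T) (A \<times> B)"
  using assms
  by (intro has_sum_SigmaI_nonneg[where g = "\<lambda>x. f x * T"])
     (auto intro!: has_sum_cmult_right has_sum_cmult_left)

lemma has_sum_convolution_nat2:
  fixes f g :: "nat \<Rightarrow> nat \<Rightarrow> real"
  assumes f: "((\<lambda>(L, M). f L M) has_sum S) UNIV" and g: "((\<lambda>(L, M). g L M) has_sum T) UNIV"
    and "\<And>L M. f L M \<ge> 0" "\<And>L M. g L M \<ge> 0"
  shows "((\<lambda>(L, M). \<Sum>L'\<le>L. \<Sum>M'\<le>M. f L' M' * g (L - L') (M - M')) has_sum S * T) UNIV"
proof -
  have "((\<lambda>((L, M), (L', M')). f L M * g L' M') has_sum S * T) UNIV"
    using has_sum_mult_nonneg[OF f g] assms by (simp add: case_prod_unfold)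
  then have "((\<lambda>((L, M), (L', M')). f L' M' * g (L - L') (M - M')) has_sum S * T)
      (SIGMA (L, M):UNIV. {..L} \<times> {..M})"
    by (subst has_sum_reindex_bij_witness
          [where j = "\<lambda>((L, M), (L', M')). ((L', M'), (L - L', M - M'))"
          and i = "\<lambda>((L', M'), (L'', M'')). ((L' + L'', M' + M''), (L', M'))" and T = UNIV])
       auto
  from has_sum_Sigma'[OF this]
  show ?thesis
    by (auto simp: case_prod_unfold sum.cartesian_product intro!: has_sum_finiteI)
qed

section \<open>Binomial series\<close>

lemma central_binomial_eq_gchoose: "real ((2 * k) choose k) = ((-1/2) gchoose k) * (-4)^k"
proof -
  have "real ((2 * k) choose k) = fact (2 * k) / (fact k * fact k)"
    by (simp add: binomial_fact mult_2)
  also have "\<dots> = 4^k * pochhammer (1/2) k / fact k"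
    by (simp add: fact_double power_mult)
  also have "\<dots> = ((-1/2) gchoose k) * (-4)^k"
    by (simp add: gbinomial_pochhammer power_mult_distrib[symmetric])
  finally show ?thesis .
qed

lemma central_binomial_has_sum:
  fixes t :: real
  assumes "0 \<le> t" "t < 1/4"
  shows "((\<lambda>k. real ((2 * k) choose k) * t^k) has_sum 1 / sqrt (1 - 4 * t)) UNIV"
proof (rule sums_nonneg_imp_has_sum)
  have "(\<lambda>k. ((-1/2) gchoose k) * (-4 * t)^k) sums (1 + -4 * t) powr (-1/2)"
    using assms by (intro gen_binomial_real) auto
  moreover have "(1 + -4 * t) powr (-1/2) = 1 / sqrt (1 - 4 * t)"
    using assms by (simp add: powr_minus_divide powr_half_sqrt)
  ultimately show "(\<lambda>k. real ((2 * k) choose k) * t^k) sums (1 / sqrt (1 - 4 * t))"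
    by (simp add: central_binomial_eq_gchoose power_mult_distrib power_minus[of "4 * t"]
        power_minus[of 4] mult.assoc)
qed (use assms in auto)

lemma negative_binomial_has_sum:
  fixes s :: real
  assumes "0 \<le> s" "s < 1"
  shows "((\<lambda>n. real ((n + r) choose r) * s^n) has_sum 1 / (1 - s)^(r + 1)) UNIV"
proof (rule sums_nonneg_imp_has_sum)
  have "(\<lambda>n. ((-(real r + 1)) gchoose n) * (-s)^n) sums (1 + -s) powr (-(real r + 1))"
    using assms by (intro gen_binomial_real) auto
  moreover have "((-(real r + 1)) gchoose n) * (-s)^n = real ((n + r) choose r) * s^n" for n
  proof -
    have "(-(real r + 1)) gchoose n = (-1)^n * ((real r + 1 + real n - 1) gchoose n)"
      by (rule gbinomial_minus)
    also have "real r + 1 + real n - 1 = real (n + r)"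
      by simp
    also have "real (n + r) gchoose n = real ((n + r) choose n)"
      by (rule binomial_gbinomial[symmetric])
    also have "(n + r) choose n = (n + r) choose r"
      using binomial_symmetric[of n "n + r"] by simp
    finally have "(-(real r + 1)) gchoose n = (-1)^n * real ((n + r) choose r)" .
    moreover have "(-s)^n = (-1)^n * s^n"
      by (rule power_minus)
    ultimately show ?thesis
      by (simp add: mult_ac flip: power_mult_distrib)
  qed
  moreover have "(1 + -s) powr (-(real r + 1)) = 1 / (1 - s)^(r + 1)"
  proof -
    have "(1 - s) powr (real r + 1) = (1 - s)^(r + 1)"
      using assms by (subst powr_realpow[symmetric]) (auto simp: add.commute)
    moreover have "(1 - s) powr (-(real r + 1)) = 1 / (1 - s) powr (real r + 1)"
      by (rule powr_minus_divide)
    ultimately show ?thesis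
      by simp
  qed
  ultimately show "(\<lambda>n. real ((n + r) choose r) * s^n) sums (1 / (1 - s)^(r + 1))"
    by simp
qed (use assms in auto)

lemma bivariate_negative_binomial_has_sum:
  fixes x y :: real
  assumes "0 \<le> x" "0 \<le> y" "x + y < 1"
  shows "((\<lambda>(a, b). real ((a + b + r) choose r) * real ((a + b) choose a) * x^a * y^b)
           has_sum 1 / (1 - (x + y))^(r + 1)) UNIV"
proof -
  define f where "f = (\<lambda>(n, a). real ((n + r) choose r) * real (n choose a) * x^a * y^(n - a))"
  have "(f has_sum 1 / (1 - (x + y))^(r + 1)) (SIGMA n:UNIV. {..n})"
  proof (rule has_sum_SigmaI_nonneg[where g = "\<lambda>n. real ((n + r) choose r) * (x + y)^n"])
    show "((\<lambda>a. f (n, a)) has_sum real ((n + r) choose r) * (x + y)^n) {..n}" for n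
      by (intro has_sum_finiteI) (simp_all add: f_def binomial_ring sum_distrib_left mult_ac)
    show "((\<lambda>n. real ((n + r) choose r) * (x + y)^n) has_sum 1 / (1 - (x + y))^(r + 1)) UNIV"
      using assms by (intro negative_binomial_has_sum) auto
  qed (use assms in \<open>simp add: f_def\<close>)
  then show ?thesis
    by (subst has_sum_reindex_bij_witness[where j = "\<lambda>(a, b). (a + b, a)"
          and i = "\<lambda>(n, a). (a, n - a)"
          and T = "SIGMA n:UNIV. {..n}"])
       (auto simp: f_def)
qed

section \<open>The generating function of \<open>binom_sq\<close>\<close>

lemma choose_mult_comm:
  assumes "k + j \<le> n"
  shows "(n choose k) * ((n - k) choose j) = (n choose j) * ((n - j) choose k)"
proof -
  have "(n choose k) * ((n - k) choose j) = (n choose (k + j)) * ((k + j) choose k)"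
    using choose_mult[of k "k + j" n] assms by simp
  also have "(k + j) choose k = (k + j) choose j"
    using binomial_symmetric[of k "k + j"] by simp
  also have "(n choose (k + j)) * \<dots> = (n choose j) * ((n - j) choose k)"
    using choose_mult[of j "k + j" n] assms by (simp add: add.commute)
  finally show ?thesis .
qed

lemma binom_sq_term_eq:
  assumes "k \<le> l" "k \<le> m"
  shows "((2 * k) choose k) * ((l + m) choose (2 * k)) * ((l + m - 2 * k) choose (l - k))
       = ((l + m) choose l) * (l choose k) * (m choose k)"
proof -
  have "((l + m) choose (2 * k)) * ((2 * k) choose k) = ((l + m) choose k) * ((l + m - k) choose k)"
    using choose_mult[of k "2 * k" "l + m"] assms by simp
  moreover have "((l + m) choose l) * (l choose k)
      = ((l + m) choose k) * ((l + m - k) choose (l - k))"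
    using choose_mult[of k l "l + m"] assms by simp
  moreover have "((l + m - k) choose k) * ((l + m - 2 * k) choose (l - k))
      = ((l + m - k) choose (l - k)) * (m choose k)"
    using choose_mult_comm[of k "l - k" "l + m - k"] assms by (simp add: mult_2)
  ultimately show ?thesis
    by (metis mult.assoc mult.commute)
qed

lemma binom_sq_eq_sum:
  "binom_sq l m = (\<Sum>k\<le>min l m.
     ((2 * k) choose k) * ((l + m) choose (2 * k)) * ((l + m - 2 * k) choose (l - k)))"
proof -
  have "(l + m) choose l = (\<Sum>k\<le>m. (l choose k) * (m choose (m - k)))"
    using vandermonde[of l m m] binomial_symmetric[of l "l + m"] by simp
  also have "\<dots> = (\<Sum>k\<le>min l m. (l choose k) * (m choose k))"
    by (rule sum.mono_neutral_cong_right) (auto simp: binomial_symmetric[symmetric])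
  finally have "binom_sq l m = (\<Sum>k\<le>min l m. ((l + m) choose l) * (l choose k) * (m choose k))"
    by (simp add: binom_sq_def power2_eq_square sum_distrib_left mult.assoc)
  also have "\<dots> = (\<Sum>k\<le>min l m.
      ((2 * k) choose k) * ((l + m) choose (2 * k)) * ((l + m - 2 * k) choose (l - k)))"
    by (intro sum.cong refl) (simp add: binom_sq_term_eq)
  finally show ?thesis .
qed

lemma central_negative_binomial_has_sum:
  fixes x y :: real
  assumes xy: "0 \<le> x" "0 \<le> y" "x + y < 1" "4 * x * y < (1 - (x + y))^2"
  shows "((\<lambda>(k, a, b). real ((2 * k) choose k) * real ((a + b + 2 * k) choose (2 * k))
            * real ((a + b) choose a) * x^(a + k) * y^(b + k))
           has_sum 1 / sqrt ((1 - (x + y))^2 - 4 * x * y)) UNIV"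
proof -
  define F where "F = (\<lambda>(k, a, b). real ((2 * k) choose k) * real ((a + b + 2 * k) choose (2 * k))
      * real ((a + b) choose a) * x^(a + k) * y^(b + k))"
  define s where "s = x + y"
  define t where "t = x * y / (1 - s)^2"
  have s: "s < 1" "4 * x * y < (1 - s)^2"
    using xy by (simp_all add: s_def)
  have "(F has_sum 1 / sqrt (1 - 4 * t) / (1 - s)) (SIGMA k:UNIV. UNIV)"
  proof (rule has_sum_SigmaI_nonneg[where g = "\<lambda>k. real ((2 * k) choose k) * t^k / (1 - s)"])
    show "((\<lambda>k. real ((2 * k) choose k) * t^k / (1 - s))
        has_sum 1 / sqrt (1 - 4 * t) / (1 - s)) UNIV"
      using s xy
      by (intro has_sum_divide_const central_binomial_has_sum) (auto simp: t_def field_simps)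
    fix k :: nat
    have "real ((2 * k) choose k) * (x * y)^k * (1 / (1 - s)^(2 * k + 1))
        = real ((2 * k) choose k) * t^k / (1 - s)"
      by (simp add: t_def power_divide field_simps flip: power_mult)
    then show "((\<lambda>p. F (k, p)) has_sum real ((2 * k) choose k) * t^k / (1 - s)) UNIV"
      using has_sum_cmult_right[OF bivariate_negative_binomial_has_sum[OF xy(1-3), of "2 * k"],
          of "real ((2 * k) choose k) * (x * y)^k"]
      by (simp add: F_def s_def case_prod_unfold power_add power_mult_distrib mult_ac)
  qed (use xy in \<open>simp add: F_def case_prod_unfold\<close>)
  moreover have "(1 - s)^2 - 4 * x * y = (1 - s)^2 * (1 - 4 * t)"
    using s by (simp add: t_def field_simps)
  ultimately show ?thesis
    using s by (simp add: F_def s_def real_sqrt_mult mult_ac)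
qed

lemma binom_sq_has_sum:
  fixes x y :: real
  assumes "0 \<le> x" "0 \<le> y" "x + y < 1" "4 * x * y < (1 - (x + y))^2"
  shows "((\<lambda>(l, m). real (binom_sq l m) * x^l * y^m)
           has_sum 1 / sqrt ((1 - (x + y))^2 - 4 * x * y)) UNIV"
proof -
  define T where "T = (\<lambda>(k, a, b). real ((2 * k) choose k) * real ((a + b + 2 * k) choose (2 * k))
      * real ((a + b) choose a) * x^(a + k) * y^(b + k))"
  have "((\<lambda>((l, m), k). T (k, l - k, m - k)) has_sum 1 / sqrt ((1 - (x + y))^2 - 4 * x * y))
      (SIGMA (l, m):UNIV. {..min l m})"
    using central_negative_binomial_has_sum[OF assms]
    by (subst has_sum_reindex_bij_witness[where j = "\<lambda>((l, m), k). (k, l - k, m - k)"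
          and i = "\<lambda>(k, a, b). ((a + k, b + k), k)" and T = UNIV])
       (auto simp: T_def)
  from has_sum_Sigma'[OF this]
  have "((\<lambda>(l, m). \<Sum>k\<le>min l m. T (k, l - k, m - k))
      has_sum 1 / sqrt ((1 - (x + y))^2 - 4 * x * y)) UNIV"
    by (auto simp: case_prod_unfold intro!: has_sum_finiteI)
  moreover have "(\<Sum>k\<le>min l m. T (k, l - k, m - k)) = real (binom_sq l m) * x^l * y^m" for l m
  proof -
    have "T (k, l - k, m - k) = real (((2 * k) choose k) * ((l + m) choose (2 * k))
        * ((l + m - 2 * k) choose (l - k))) * (x^l * y^m)" if "k \<le> min l m" for k
    proof -
      have "l - k + (m - k) + 2 * k = l + m" "l - k + (m - k) = l + m - 2 * k"
        using that by auto
      then show ?thesis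
        using that by (simp add: T_def)
    qed
    then show ?thesis
      by (simp add: binom_sq_eq_sum sum_distrib_right mult.assoc)
  qed
  ultimately show ?thesis
    by simp
qed

lemma geometric_has_sum_div:
  fixes w D :: real
  assumes "0 \<le> w" "w < D"
  shows "((\<lambda>j. w^j / D^(Suc j)) has_sum 1 / (D - w)) UNIV"
proof -
  have "((\<lambda>j. (w / D)^j / D) has_sum 1 / (1 - w / D) / D) UNIV"
    using assms by (intro has_sum_divide_const sums_nonneg_imp_has_sum geometric_sums) auto
  moreover have "1 / (1 - w / D) / D = 1 / (D - w)"
    using assms by (simp add: field_simps)
  ultimately show ?thesis
    by (simp add: power_divide mult.commute)
qed

lemma K_has_sum:
  fixes x y :: real
  assumes xy: "0 \<le> x" "0 \<le> y" "x + y < 1" "4 * x * y < (1 - (x + y))^2"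
  shows "((\<lambda>(L, M). real (K L M j) * x^L * y^M)
           has_sum (1 / sqrt ((1 - (x + y))^2 - 4 * x * y))^(Suc j)) UNIV"
proof (induction j)
  case 0
  then show ?case
    using binom_sq_has_sum[OF xy] by (simp add: K_0)
next
  case (Suc j)
  let ?G = "1 / sqrt ((1 - (x + y))^2 - 4 * x * y)"
  have "((\<lambda>(L, M). \<Sum>L'\<le>L. \<Sum>M'\<le>M. real (K L' M' j) * x^L' * y^M'
      * (real (binom_sq (L - L') (M - M')) * x^(L - L') * y^(M - M')))
      has_sum ?G^(Suc j) * ?G) UNIV"
    using has_sum_convolution_nat2[OF Suc binom_sq_has_sum[OF xy]] xy by simp
  moreover have "(\<Sum>L'\<le>L. \<Sum>M'\<le>M. real (K L' M' j) * x^L' * y^M'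
      * (real (binom_sq (L - L') (M - M')) * x^(L - L') * y^(M - M')))
      = real (K L M (Suc j)) * x^L * y^M" for L M
  proof -
    have "real (K L' M' j) * x^L' * y^M'
        * (real (binom_sq (L - L') (M - M')) * x^(L - L') * y^(M - M'))
        = real (K L' M' j * binom_sq (L - L') (M - M')) * (x^L * y^M)"
      if "L' \<le> L" "M' \<le> M" for L' M'
    proof -
      have "x^L = x^L' * x^(L - L')" "y^M = y^M' * y^(M - M')"
        using that by (simp_all flip: power_add)
      then show ?thesis
        by (simp only:) (simp add: mult_ac)
    qed
    then have "(\<Sum>L'\<le>L. \<Sum>M'\<le>M. real (K L' M' j) * x^L' * y^M'
        * (real (binom_sq (L - L') (M - M')) * x^(L - L') * y^(M - M')))
        = (\<Sum>L'\<le>L. \<Sum>M'\<le>M. real (K L' M' j * binom_sq (L - L') (M - M')) * (x^L * y^M))"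
      by (intro sum.cong refl) auto
    then show ?thesis
      by (simp add: K_Suc sum_distrib_right mult.assoc)
  qed
  ultimately show ?case
    by (simp add: mult_ac)
qed

theorem mainTheorem3:
  fixes w x y :: real
  assumes "0 \<le> x" "x < 1/4" "0 \<le> y" "y < 1/4" "0 \<le> w"
    and "w < sqrt ((1 - (x + y))^2 - 4*x*y)"
  shows "((\<lambda>(j, L, M). w^j * x^L * y^M * real (K L M j)) has_sum
           (1 / (sqrt ((1 - (x + y))^2 - 4*x*y) - w))) (UNIV :: (nat \<times> nat \<times> nat) set)"
proof -
  define D where "D = sqrt ((1 - (x + y))^2 - 4 * x * y)"
  have wD: "0 \<le> w" "w < D"
    using assms by (simp_all add: D_def)
  then have "0 < D"
    by linarith
  then have "(1 - (x + y))^2 - 4 * x * y > 0"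
    by (simp add: D_def)
  \<comment> \<open>\<open>x, y < 1/4\<close> only serves to exclude the branch \<open>x + y > 1\<close> of \<open>(1-x-y)^2 > 4xy\<close>\<close>
  then have xy: "0 \<le> x" "0 \<le> y" "x + y < 1" "4 * x * y < (1 - (x + y))^2"
    using assms by auto
  have "((\<lambda>(j, L, M). w^j * x^L * y^M * real (K L M j)) has_sum 1 / (D - w)) (SIGMA j:UNIV. UNIV)"
  proof (rule has_sum_SigmaI_nonneg[OF _ geometric_has_sum_div[OF wD]])
    show "((\<lambda>p. (\<lambda>(j, L, M). w^j * x^L * y^M * real (K L M j)) (j, p))
        has_sum w^j / D^(Suc j)) UNIV" for j
      using has_sum_cmult_right[OF K_has_sum[OF xy, of j], of "w^j"]
      by (simp add: D_def case_prod_unfold power_one_over mult_ac)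
  qed (use xy wD in auto)
  then show ?thesis
    by (simp add: D_def)
qed

end
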